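(* Let $G$ be a directed $st$-graph that does not contain a subgraph homeomorphic to the Wheatstone graph $W$, and let $C$ be a simple directed cycle in $G$. Then some edge $e$ of $C$ can be removed so that the resulting graph $G'=(V,E\setminus\{e\},s,t)$ satisfies $\mathrm{Path}_A(G')=\mathrm{Path}_A(G)$.
   Context: A directed $st$-graph $G=(V,E,s,t)$ is a finite directed graph with no self-loops and no parallel edges, with distinct source $s$ (no incoming edges) and sink $t$ (no outgoing edges), such that every vertex lies on some directed walk from $s$ to $t$. $\mathrm{Path}_A(G)$ is the set of acyclic (simple) directed paths from $s$ to $t$ in $G$. The Wheatstone graph $W$ has vertices $s,u,v,t$ and edges $s\to u$, $s\to v$, $u\to v$, $u\to t$, $v\to t$. $G$ contains a subgraph homeomorphic to $W$ if there are distinct vertices $s',u',v',t'$ of $G$ and directed paths $s'\leadsto u'$, $s'\leadsto v'$, $u'\leadsto v'$, $u'\leadsto t'$, $v'\leadsto t'$ that pairwise share no vertices other than common endpoints. *)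

theory Defs
  imports Main
begin

text \<open>Directed graphs are given by a vertex set V and an edge relation E of ordered pairs
(so parallel edges are excluded by construction).\<close>

definition st_graph :: "'a set \<Rightarrow> ('a \<times> 'a) set \<Rightarrow> 'a \<Rightarrow> 'a \<Rightarrow> bool" where
  "st_graph V E s t \<longleftrightarrow>
     finite V \<and> E \<subseteq> V \<times> V \<and> (\<forall>u. (u, u) \<notin> E) \<and>
     s \<in> V \<and> t \<in> V \<and> s \<noteq> t \<and>
     (\<forall>u. (u, s) \<notin> E) \<and> (\<forall>u. (t, u) \<notin> E) \<and>
     (\<forall>v\<in>V. (s, v) \<in> E\<^sup>* \<and> (v, t) \<in> E\<^sup>*)"

fun is_walk :: "('a \<times> 'a) set \<Rightarrow> 'a list \<Rightarrow> bool" where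
  "is_walk E [] = False"
| "is_walk E [v] = True"
| "is_walk E (u # v # vs) = ((u, v) \<in> E \<and> is_walk E (v # vs))"

definition is_path :: "('a \<times> 'a) set \<Rightarrow> 'a \<Rightarrow> 'a \<Rightarrow> 'a list \<Rightarrow> bool" where
  "is_path E x y p \<longleftrightarrow> is_walk E p \<and> distinct p \<and> hd p = x \<and> last p = y"

definition PathA :: "('a \<times> 'a) set \<Rightarrow> 'a \<Rightarrow> 'a \<Rightarrow> 'a list set" where
  "PathA E s t = {p. is_path E s t p}"

definition simple_cycle :: "('a \<times> 'a) set \<Rightarrow> 'a list \<Rightarrow> bool" where
  "simple_cycle E c \<longleftrightarrow> length c \<ge> 2 \<and> distinct c \<and>
     (\<forall>i < length c. (c ! i, c ! (Suc i mod length c)) \<in> E)"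

definition cycle_edges :: "'a list \<Rightarrow> ('a \<times> 'a) set" where
  "cycle_edges c = {(c ! i, c ! (Suc i mod length c)) | i. i < length c}"

definition endpoints :: "'a list \<Rightarrow> 'a set" where
  "endpoints p = {hd p, last p}"

definition contains_wheatstone :: "'a set \<Rightarrow> ('a \<times> 'a) set \<Rightarrow> bool" where
  "contains_wheatstone V E \<longleftrightarrow>
    (\<exists>s' u' v' t' P1 P2 P3 P4 P5.
       s' \<in> V \<and> u' \<in> V \<and> v' \<in> V \<and> t' \<in> V \<and> distinct [s', u', v', t'] \<and>
       is_path E s' u' P1 \<and> is_path E s' v' P2 \<and> is_path E u' v' P3 \<and>
       is_path E u' t' P4 \<and> is_path E v' t' P5 \<and>
       (\<forall>P\<in>{P1, P2, P3, P4, P5}. \<forall>Q\<in>{P1, P2, P3, P4, P5}. P \<noteq> Q \<longrightarrow>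
          set P \<inter> set Q \<subseteq> endpoints P \<inter> endpoints Q))"

end

theory Submission
  imports Defs
begin

text \<open>Suppose every edge of C lies on some acyclic s-t path. Without a subdivided Wheatstone
  graph, any two acyclic s-t paths meet their common vertices in the same order: otherwise the
  second path leaves and re-enters the first in two detours whose feet interleave, and these two
  detours together with three pieces of the first path form a subdivided Wheatstone graph.
  This order is preserved by splicing a path that visits x before y with the tail of a path
  through an edge yz. Going once around C therefore yields a path visiting C!0 before the last
  vertex of C, while a path through the closing edge of C visits them in the opposite order.\<close>

lemma is_walk_iff_nth:
  "is_walk E xs \<longleftrightarrow> xs \<noteq> [] \<and> (\<forall>k. Suc k < length xs \<longrightarrow> (xs ! k, xs ! Suc k) \<in> E)"
proof (induction E xs rule: is_walk.induct)
  case (3 E u v vs)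
  have "(\<forall>k. Suc k < length (u # v # vs) \<longrightarrow> P k) \<longleftrightarrow> P 0 \<and> (\<forall>k. Suc k < length (v # vs) \<longrightarrow> P (Suc k))"
    for P :: "nat \<Rightarrow> bool"
    using All_less_Suc2[of "length (v # vs) - 1" P] by (simp add: less_Suc_eq_0_disj)
  with 3 show ?case by simp
qed auto

lemma is_walk_mono: "is_walk E xs \<Longrightarrow> E \<subseteq> F \<Longrightarrow> is_walk F xs"
  by (induction E xs rule: is_walk.induct) auto

lemma is_walk_not_Nil: "is_walk E xs \<Longrightarrow> xs \<noteq> []"
  by auto

lemma is_walk_append:
  "is_walk E xs \<Longrightarrow> is_walk E ys \<Longrightarrow> (last xs, hd ys) \<in> E \<Longrightarrow> is_walk E (xs @ ys)"
proof (induction E xs rule: is_walk.induct)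
  case (2 E v)
  then show ?case by (cases ys) auto
qed auto

lemma set_walk_subset_Field: "is_walk E xs \<Longrightarrow> 1 < length xs \<Longrightarrow> set xs \<subseteq> Field E"
  by (induction E xs rule: is_walk.induct) (force intro: FieldI1 FieldI2)+

lemma is_path_nth_0: "is_path E x y P \<Longrightarrow> P ! 0 = x"
  unfolding is_path_def by (auto simp: hd_conv_nth dest: is_walk_not_Nil)

lemma is_path_nth_last: "is_path E x y P \<Longrightarrow> P ! (length P - 1) = y"
  unfolding is_path_def by (auto simp: last_conv_nth dest: is_walk_not_Nil)

lemma is_path_append:
  assumes "is_path E x y xs" "is_path E y' z ys" "(y, y') \<in> E" "set xs \<inter> set ys = {}"
  shows "is_path E x z (xs @ ys)"
  using assms unfolding is_path_def
  by (auto intro: is_walk_append dest: is_walk_not_Nil)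

definition segment :: "'a list \<Rightarrow> nat \<Rightarrow> nat \<Rightarrow> 'a list" where
  "segment xs i j = map ((!) xs) [i..<Suc j]"

lemma length_segment [simp]: "length (segment xs i j) = Suc j - i"
  by (simp add: segment_def del: upt_Suc)

lemma nth_segment [simp]: "k < Suc j - i \<Longrightarrow> segment xs i j ! k = xs ! (i + k)"
  by (simp add: segment_def del: upt_Suc)

lemma set_segment: "set (segment xs i j) = (!) xs ` {i..j}"
  by (auto simp: segment_def)

lemma is_path_segment:
  assumes "is_walk E xs" "distinct xs" "i \<le> j" "j < length xs"
  shows "is_path E (xs ! i) (xs ! j) (segment xs i j)"
  using assms unfolding is_path_def is_walk_iff_nth segment_def
  by (auto simp: distinct_map inj_on_nth last_map hd_map simp del: upt_Suc)

lemma segment_inter_subset: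
  "\<forall>k. i < k \<and> k < j \<longrightarrow> xs ! k \<notin> A \<Longrightarrow> set (segment xs i j) \<inter> A \<subseteq> {xs ! i, xs ! j}"
  unfolding set_segment by (auto simp: le_less)

text \<open>position xs x is unspecified when x does not occur in xs.\<close>
definition position :: "'a list \<Rightarrow> 'a \<Rightarrow> nat" where
  "position xs = the_inv_into {..<length xs} ((!) xs)"

lemma position_nth: "distinct xs \<Longrightarrow> i < length xs \<Longrightarrow> position xs (xs ! i) = i"
  unfolding position_def by (auto intro: the_inv_into_f_f inj_on_nth)

lemma nth_position: "distinct xs \<Longrightarrow> x \<in> set xs \<Longrightarrow> xs ! position xs x = x"
  unfolding position_def by (auto intro: f_the_inv_into_f inj_on_nth simp: in_set_conv_nth)

lemma position_less: "distinct xs \<Longrightarrow> x \<in> set xs \<Longrightarrow> position xs x < length xs"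
  by (metis in_set_conv_nth position_nth)

lemma inj_on_position: "distinct xs \<Longrightarrow> inj_on (position xs) (set xs)"
  by (metis inj_onI nth_position)

lemma marked_threshold_crossing:
  fixes g :: "nat \<Rightarrow> 'b::linorder"
  assumes "i \<le> j" "I i" "I j" "g i < p" "p \<le> g j"
  obtains i' j' where "i \<le> i'" "i' < j'" "j' \<le> j" "I i'" "I j'"
    "\<forall>k. i' < k \<and> k < j' \<longrightarrow> \<not> I k" "g i' < p" "p \<le> g j'"
  using assms
proof (induction j arbitrary: thesis rule: less_induct)
  case (less j)
  have "i < j"
    using less.prems(2,5,6) by (metis le_neq_implies_less leD)
  define j0 where "j0 = (GREATEST k. i \<le> k \<and> k < j \<and> I k)"
  have j0: "i \<le> j0" "j0 < j" "I j0"
    using GreatestI_nat[of "\<lambda>k. i \<le> k \<and> k < j \<and> I k" i j] \<open>i < j\<close> less.prems(3)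
    unfolding j0_def by auto
  have gap: "\<not> I k" if "j0 < k" "k < j" for k
    using Greatest_le_nat[of "\<lambda>k. i \<le> k \<and> k < j \<and> I k" k j] j0 that unfolding j0_def by auto
  show ?case
  proof (cases "g j0 < p")
    case True
    with j0 gap less.prems show ?thesis by auto
  next
    case False
    show ?thesis
      by (rule less.IH[OF \<open>j0 < j\<close>]) (use less.prems j0 False in \<open>auto simp: not_less\<close>)
  qed
qed

text \<open>Read I as the indices at which one path meets another and g as the position reached
  along the other path. The second jump is the first one after b beyond the furthest position M
  reached before b; the first jump is the last one before that point over the start of the
  second.\<close>
lemma crossing_jumps:
  fixes g :: "nat \<Rightarrow> nat"
  assumes inj: "inj_on g {k. k \<le> n \<and> I k}"
    and bounds: "\<And>k. I k \<Longrightarrow> g 0 \<le> g k \<and> g k \<le> g n"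
    and marked: "I 0" "I n" "I a" "I b"
    and "a < b" "b \<le> n" "g b < g a"
  obtains k1 k2 k3 k4 where "k1 < k2" "k2 < k3" "k3 < k4" "k4 \<le> n" "I k1" "I k2" "I k3" "I k4"
    "\<forall>k. k1 < k \<and> k < k2 \<longrightarrow> \<not> I k" "\<forall>k. k3 < k \<and> k < k4 \<longrightarrow> \<not> I k"
    "g k1 < g k3" "g k3 < g k2" "g k2 < g k4"
proof -
  define S where "S = {k. k < b \<and> I k}"
  define M where "M = Max (g ` S)"
  have "finite S" "a \<in> S"
    using marked \<open>a < b\<close> by (auto simp: S_def)
  then have M_max: "g k \<le> M" if "k < b" "I k" for k
    using that unfolding M_def S_def by (intro Max_ge) auto
  have "M \<in> g ` S"
    unfolding M_def using \<open>finite S\<close> \<open>a \<in> S\<close> by (intro Max_in) auto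
  then obtain m where m: "m < b" "I m" "g m = M"
    unfolding S_def by blast
  have g_eq: "k = k'" if "g k = g k'" "I k" "I k'" "k \<le> n" "k' \<le> n" for k k'
    using inj that by (auto dest: inj_onD)
  have "M < g n"
    using bounds[OF m(2)] g_eq[of m n] m \<open>b \<le> n\<close> marked by fastforce
  moreover have "g b < Suc M"
    using M_max[of a] marked \<open>a < b\<close> \<open>g b < g a\<close> by simp
  ultimately obtain k3 k4 where k34: "b \<le> k3" "k3 < k4" "k4 \<le> n" "I k3" "I k4"
    "\<forall>k. k3 < k \<and> k < k4 \<longrightarrow> \<not> I k" "g k3 < Suc M" "Suc M \<le> g k4"
    using marked_threshold_crossing[of b n I g "Suc M"] marked \<open>b \<le> n\<close> by auto
  have "g k3 < M"
    using g_eq[of k3 m] k34 m \<open>b \<le> n\<close> by fastforce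
  moreover have "g 0 < g k3"
    using bounds[of k3] g_eq[of 0 k3] k34 marked \<open>a < b\<close> by fastforce
  ultimately obtain k1 k2 where k12: "k1 < k2" "k2 \<le> m" "I k1" "I k2"
    "\<forall>k. k1 < k \<and> k < k2 \<longrightarrow> \<not> I k" "g k1 < g k3" "g k3 \<le> g k2"
    using marked_threshold_crossing[of 0 m I g "g k3"] m marked by auto
  have "g k3 \<noteq> g k2"
    using g_eq[of k3 k2] k12 k34 m \<open>b \<le> n\<close> by fastforce
  moreover have "g k2 \<le> M"
    using M_max k12 m by simp
  ultimately show ?thesis
    using that[of k1 k2 k3 k4] k12 k34 m by simp
qed

definition internally_disjoint :: "'a list \<Rightarrow> 'a list \<Rightarrow> bool" where
  "internally_disjoint X Y \<longleftrightarrow> set X \<inter> set Y \<subseteq> endpoints X \<inter> endpoints Y"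

lemma contains_wheatstoneI:
  assumes "distinct [s', u', v', t']" "{s', u', v', t'} \<subseteq> V"
    and "is_path E s' u' P1" "is_path E s' v' P2" "is_path E u' v' P3"
      "is_path E u' t' P4" "is_path E v' t' P5"
    and "internally_disjoint P1 P2" "internally_disjoint P1 P3" "internally_disjoint P1 P4"
      "internally_disjoint P1 P5" "internally_disjoint P2 P3" "internally_disjoint P2 P4"
      "internally_disjoint P2 P5" "internally_disjoint P3 P4" "internally_disjoint P3 P5"
      "internally_disjoint P4 P5"
  shows "contains_wheatstone V E"
proof -
  have "\<forall>P\<in>{P1, P2, P3, P4, P5}. \<forall>Q\<in>{P1, P2, P3, P4, P5}. P \<noteq> Q \<longrightarrow> internally_disjoint P Q"
    using assms(8-17) unfolding internally_disjoint_def by blast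
  then show ?thesis
    unfolding contains_wheatstone_def internally_disjoint_def using assms(1-7) by blast
qed

lemma internally_disjoint_along_path:
  assumes "distinct P"
    and "set X \<inter> set P \<subseteq> (!) P ` A" "set Y \<inter> set P \<subseteq> (!) P ` B"
    and "endpoints X = (!) P ` A'" "endpoints Y = (!) P ` B'"
    and "A \<union> B \<subseteq> {..<length P}" "set X \<inter> set Y \<subseteq> set P" "A \<inter> B \<subseteq> A' \<inter> B'"
  shows "internally_disjoint X Y"
proof -
  have "set X \<inter> set Y \<subseteq> (!) P ` A \<inter> (!) P ` B"
    using assms(2,3,7) by blast
  also have "\<dots> = (!) P ` (A \<inter> B)"
    using assms(1,6) by (intro inj_on_image_Int[symmetric, of _ "{..<length P}"] inj_on_nth) auto
  also have "\<dots> \<subseteq> (!) P ` A' \<inter> (!) P ` B'"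
    using assms(8) by blast
  finally show ?thesis
    unfolding internally_disjoint_def assms(4,5) .
qed

locale wheatstone_free =
  fixes V :: "'a set" and E :: "('a \<times> 'a) set"
  assumes edges_subset: "E \<subseteq> V \<times> V"
    and no_wheatstone: "\<not> contains_wheatstone V E"

text \<open>F and G are detours of P with interleaving feet; with the pieces of P between a, c, b
  and e they form a subdivided Wheatstone graph on P!a, P!c, P!b, P!e.\<close>
lemma (in wheatstone_free) no_crossing_ears:
  assumes P: "is_walk E P" "distinct P"
    and order: "a < c" "c < b" "b < e" "e < length P"
    and F: "is_path E (P ! a) (P ! b) F" "set F \<inter> set P \<subseteq> {P ! a, P ! b}"
    and G: "is_path E (P ! c) (P ! e) G" "set G \<inter> set P \<subseteq> {P ! c, P ! e}"
    and FG: "set F \<inter> set G = {}"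
  shows False
proof -
  define P1 P3 P5 where "P1 = segment P a c" and "P3 = segment P c b" and "P5 = segment P b e"
  have paths: "is_path E (P ! a) (P ! c) P1" "is_path E (P ! c) (P ! b) P3"
    "is_path E (P ! b) (P ! e) P5"
    unfolding P1_def P3_def P5_def using order by (auto intro: is_path_segment[OF P])
  have sets: "set P1 = (!) P ` {a..c}" "set P3 = (!) P ` {c..b}" "set P5 = (!) P ` {b..e}"
    unfolding P1_def P3_def P5_def set_segment by simp_all
  then have on_P: "set P1 \<subseteq> set P" "set P3 \<subseteq> set P" "set P5 \<subseteq> set P"
    using order by auto
  have contact: "set P1 \<inter> set P \<subseteq> (!) P ` {a..c}" "set P3 \<inter> set P \<subseteq> (!) P ` {c..b}"
    "set P5 \<inter> set P \<subseteq> (!) P ` {b..e}" "set F \<inter> set P \<subseteq> (!) P ` {a, b}"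
    "set G \<inter> set P \<subseteq> (!) P ` {c, e}"
    using sets F(2) G(2) by auto
  have ends: "endpoints P1 = (!) P ` {a, c}" "endpoints P3 = (!) P ` {c, b}"
    "endpoints P5 = (!) P ` {b, e}" "endpoints F = (!) P ` {a, b}" "endpoints G = (!) P ` {c, e}"
    using paths F(1) G(1) unfolding endpoints_def is_path_def by auto
  note disjoint = internally_disjoint_along_path[OF P(2)]
  have disj: "internally_disjoint P1 F" "internally_disjoint P1 P3" "internally_disjoint P1 G"
    "internally_disjoint P1 P5" "internally_disjoint F P3" "internally_disjoint F G"
    "internally_disjoint F P5" "internally_disjoint P3 G" "internally_disjoint P3 P5"
    "internally_disjoint G P5"
    using order on_P FG
    by (intro disjoint[OF contact(1) contact(4) ends(1) ends(4)]
        disjoint[OF contact(1) contact(2) ends(1) ends(2)]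
        disjoint[OF contact(1) contact(5) ends(1) ends(5)]
        disjoint[OF contact(1) contact(3) ends(1) ends(3)]
        disjoint[OF contact(4) contact(2) ends(4) ends(2)]
        disjoint[OF contact(4) contact(5) ends(4) ends(5)]
        disjoint[OF contact(4) contact(3) ends(4) ends(3)]
        disjoint[OF contact(2) contact(5) ends(2) ends(5)]
        disjoint[OF contact(2) contact(3) ends(2) ends(3)]
        disjoint[OF contact(5) contact(3) ends(5) ends(3)]; fastforce)+
  have "set P \<subseteq> V"
    using set_walk_subset_Field[OF P(1)] edges_subset order unfolding Field_def by auto
  then have in_V: "{P ! a, P ! c, P ! b, P ! e} \<subseteq> V"
    using order by auto
  have "distinct [P ! a, P ! c, P ! b, P ! e]"
    using P(2) order by (auto simp: nth_eq_iff_index_eq)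
  then have "contains_wheatstone V E"
    using contains_wheatstoneI[OF _ in_V paths(1) F(1) paths(2) G(1) paths(3) disj] by blast
  with no_wheatstone show False ..
qed

lemma (in wheatstone_free) no_crossing_detours:
  assumes P: "is_walk E P" "distinct P" and Q: "is_walk E Q" "distinct Q"
    and k: "k1 < k2" "k2 < k3" "k3 < k4" "k4 < length Q"
    and on_P: "Q ! k1 \<in> set P" "Q ! k2 \<in> set P" "Q ! k3 \<in> set P" "Q ! k4 \<in> set P"
    and gaps: "\<forall>k. k1 < k \<and> k < k2 \<longrightarrow> Q ! k \<notin> set P" "\<forall>k. k3 < k \<and> k < k4 \<longrightarrow> Q ! k \<notin> set P"
    and order: "position P (Q ! k1) < position P (Q ! k3)" "position P (Q ! k3) < position P (Q ! k2)"
      "position P (Q ! k2) < position P (Q ! k4)"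
  shows False
proof (rule no_crossing_ears[OF P order])
  have "set (segment Q k1 k2) \<inter> set (segment Q k3 k4) \<subseteq> (!) Q ` ({k1..k2} \<inter> {k3..k4})"
    unfolding set_segment using k Q(2) by (auto simp: nth_eq_iff_index_eq)
  then show "set (segment Q k1 k2) \<inter> set (segment Q k3 k4) = {}"
    using k by auto
qed (use k on_P segment_inter_subset[OF gaps(1)] segment_inter_subset[OF gaps(2)]
      is_path_segment[OF Q, of k1 k2] is_path_segment[OF Q, of k3 k4]
      in \<open>auto simp: nth_position[OF P(2)] position_less[OF P(2)]\<close>)

definition visits_before :: "('a \<times> 'a) set \<Rightarrow> 'a \<Rightarrow> 'a \<Rightarrow> 'a \<Rightarrow> 'a \<Rightarrow> bool" where
  "visits_before E s t x y \<longleftrightarrow>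
     (\<exists>P i j. is_path E s t P \<and> i < j \<and> j < length P \<and> P ! i = x \<and> P ! j = y)"

definition uses_edge :: "('a \<times> 'a) set \<Rightarrow> 'a \<Rightarrow> 'a \<Rightarrow> 'a \<Rightarrow> 'a \<Rightarrow> bool" where
  "uses_edge E s t x y \<longleftrightarrow>
     (\<exists>P i. is_path E s t P \<and> Suc i < length P \<and> P ! i = x \<and> P ! Suc i = y)"

lemma uses_edge_imp_visits_before: "uses_edge E s t x y \<Longrightarrow> visits_before E s t x y"
  unfolding uses_edge_def visits_before_def by blast

lemma PathA_remove_unused_edge:
  assumes "\<not> uses_edge E s t x y"
  shows "PathA (E - {(x, y)}) s t = PathA E s t"
proof
  show "PathA (E - {(x, y)}) s t \<subseteq> PathA E s t"
    unfolding PathA_def is_path_def using is_walk_mono by blast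
  show "PathA E s t \<subseteq> PathA (E - {(x, y)}) s t"
  proof
    fix P
    assume "P \<in> PathA E s t"
    then have P: "is_path E s t P"
      by (simp add: PathA_def)
    have "(P ! k, P ! Suc k) \<noteq> (x, y)" if "Suc k < length P" for k
      using assms P that unfolding uses_edge_def by blast
    then show "P \<in> PathA (E - {(x, y)}) s t"
      using P unfolding PathA_def is_path_def is_walk_iff_nth by auto
  qed
qed

lemma (in wheatstone_free) visits_before_asym:
  assumes "visits_before E s t x y" "visits_before E s t y x"
  shows False
proof -
  obtain P i j where P: "is_path E s t P" and ij: "i < j" "j < length P" "P ! i = x" "P ! j = y"
    using assms(1) unfolding visits_before_def by blast
  obtain Q a b where Q: "is_path E s t Q" and ab: "a < b" "b < length Q" "Q ! a = y" "Q ! b = x"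
    using assms(2) unfolding visits_before_def by blast
  define n where "n = length Q - 1"
  define g where "g k = position P (Q ! k)" for k
  have Pw: "is_walk E P" "distinct P" and Qw: "is_walk E Q" "distinct Q"
    using P Q unfolding is_path_def by auto
  have ends: "P ! 0 = s" "P ! (length P - 1) = t" "Q ! 0 = s" "Q ! n = t"
    using is_path_nth_0[OF P] is_path_nth_0[OF Q] is_path_nth_last[OF P] is_path_nth_last[OF Q]
    unfolding n_def by auto
  have "n < length Q" "b \<le> n"
    using ab unfolding n_def by simp_all
  have inj: "inj_on g {k. k \<le> n \<and> Q ! k \<in> set P}"
    unfolding g_def
  proof (rule comp_inj_on[of "(!) Q", unfolded comp_def])
    show "inj_on ((!) Q) {k. k \<le> n \<and> Q ! k \<in> set P}"
      using Qw(2) \<open>n < length Q\<close> by (intro inj_on_nth) auto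
    show "inj_on (position P) ((!) Q ` {k. k \<le> n \<and> Q ! k \<in> set P})"
      by (rule inj_on_subset[OF inj_on_position[OF Pw(2)]]) blast
  qed
  have len_P: "0 < length P" "i < length P" "length P - 1 < length P"
    using ij(1,2) by linarith+
  have g_ends: "g 0 = 0" "g n = length P - 1"
    unfolding g_def using ends position_nth[OF Pw(2) len_P(1)] position_nth[OF Pw(2) len_P(3)]
    by simp_all
  have bounds: "g 0 \<le> g k \<and> g k \<le> g n" if "Q ! k \<in> set P" for k
    using position_less[OF Pw(2) that] g_ends unfolding g_def by simp
  have on_P: "Q ! 0 \<in> set P" "Q ! n \<in> set P" "Q ! a \<in> set P" "Q ! b \<in> set P"
    using ends ab(3,4) ij(3,4) nth_mem[OF len_P(1)] nth_mem[OF len_P(3)] nth_mem[OF ij(2)]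
      nth_mem[OF len_P(2)]
    by simp_all
  have "g b < g a"
    using ab(3,4) ij position_nth[OF Pw(2) len_P(2)] position_nth[OF Pw(2) ij(2)]
    unfolding g_def by simp
  obtain k1 k2 k3 k4 where k: "k1 < k2" "k2 < k3" "k3 < k4" "k4 \<le> n"
    "Q ! k1 \<in> set P" "Q ! k2 \<in> set P" "Q ! k3 \<in> set P" "Q ! k4 \<in> set P"
    "\<forall>k. k1 < k \<and> k < k2 \<longrightarrow> Q ! k \<notin> set P" "\<forall>k. k3 < k \<and> k < k4 \<longrightarrow> Q ! k \<notin> set P"
    "g k1 < g k3" "g k3 < g k2" "g k2 < g k4"
    by (rule crossing_jumps[where I = "\<lambda>k. Q ! k \<in> set P",
          OF inj bounds on_P ab(1) \<open>b \<le> n\<close> \<open>g b < g a\<close>])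
  have "k4 < length Q"
    using k(4) \<open>n < length Q\<close> by simp
  from no_crossing_detours[OF Pw Qw k(1-3) this k(5-10)] k(11-13) show False
    unfolding g_def by blast
qed

lemma (in wheatstone_free) visits_before_trans_edge:
  assumes "visits_before E s t x y" "uses_edge E s t y z"
  shows "visits_before E s t x z"
proof -
  obtain P i j where P: "is_path E s t P" and ij: "i < j" "j < length P" "P ! i = x" "P ! j = y"
    using assms(1) unfolding visits_before_def by blast
  obtain Q q where Q: "is_path E s t Q" and q: "Suc q < length Q" "Q ! q = y" "Q ! Suc q = z"
    using assms(2) unfolding uses_edge_def by blast
  have Pw: "is_walk E P" "distinct P" and Qw: "is_walk E Q" "distinct Q"
    using P Q unfolding is_path_def by auto
  define R where "R = segment P 0 j @ segment Q (Suc q) (length Q - 1)"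
  have "set (segment P 0 j) \<inter> set (segment Q (Suc q) (length Q - 1)) = {}"
  proof (rule ccontr)
    assume "set (segment P 0 j) \<inter> set (segment Q (Suc q) (length Q - 1)) \<noteq> {}"
    then obtain k k' where "k \<in> {0..j}" "k' \<in> {Suc q..length Q - 1}" "P ! k = Q ! k'"
      unfolding set_segment by blast
    then have k: "k \<le> j" "Suc q \<le> k'" "k' < length Q" "P ! k = Q ! k'"
      using q(1) by auto
    show False
    proof (cases "k = j")
      case True
      then show False
        using k q ij Qw(2) nth_eq_iff_index_eq[of Q q k'] by simp
    next
      case False
      have "visits_before E s t (P ! k) y"
        unfolding visits_before_def using P ij k False
        by (intro exI[of _ P] exI[of _ k] exI[of _ j]) simp
      moreover have "visits_before E s t y (P ! k)"
        unfolding visits_before_def using Q q k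
        by (intro exI[of _ Q] exI[of _ q] exI[of _ k']) simp
      ultimately show False
        by (rule visits_before_asym)
    qed
  qed
  moreover have "(y, z) \<in> E"
    using Qw(1) q unfolding is_walk_iff_nth by auto
  moreover have "is_path E s y (segment P 0 j)"
    using is_path_segment[OF Pw, of 0 j] ij is_path_nth_0[OF P] by simp
  moreover have "is_path E z t (segment Q (Suc q) (length Q - 1))"
    using is_path_segment[OF Qw, of "Suc q" "length Q - 1"] q is_path_nth_last[OF Q] by simp
  ultimately have "is_path E s t R"
    unfolding R_def by (intro is_path_append)
  moreover have "R ! i = x" "R ! Suc j = z" "Suc j < length R"
    using ij q unfolding R_def by (auto simp: nth_append)
  ultimately show ?thesis
    unfolding visits_before_def using ij(1) by (metis less_SucI)
qed

lemma (in wheatstone_free) visits_before_along_used_edges: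
  assumes "\<And>i. i < n \<Longrightarrow> uses_edge E s t (f i) (f (Suc i))" "0 < n"
  shows "visits_before E s t (f 0) (f n)"
  using assms
proof (induction n)
  case (Suc n)
  show ?case
  proof (cases "n = 0")
    case True
    then show ?thesis
      using Suc.prems(1)[of 0] by (simp add: uses_edge_imp_visits_before)
  next
    case False
    then show ?thesis
      using Suc by (auto intro: visits_before_trans_edge)
  qed
qed simp

theorem lemma3:
  fixes V :: "'a set" and E :: "('a \<times> 'a) set" and s t :: 'a and C :: "'a list"
  assumes "st_graph V E s t"
    and "\<not> contains_wheatstone V E"
    and "simple_cycle E C"
  shows "\<exists>e\<in>cycle_edges C. PathA (E - {e}) s t = PathA E s t"
proof (rule ccontr)
  interpret wheatstone_free V E
    using assms(1,2) by unfold_locales (simp_all add: st_graph_def)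
  define n where "n = length C - 1"
  have n: "0 < n" "Suc n = length C"
    using assms(3) unfolding simple_cycle_def n_def by auto
  assume no_removable_edge: "\<not> ?thesis"
  have used: "uses_edge E s t (C ! i) (C ! (Suc i mod length C))" if "i < length C" for i
  proof (rule ccontr)
    assume "\<not> uses_edge E s t (C ! i) (C ! (Suc i mod length C))"
    then have "PathA (E - {(C ! i, C ! (Suc i mod length C))}) s t = PathA E s t"
      by (rule PathA_remove_unused_edge)
    moreover have "(C ! i, C ! (Suc i mod length C)) \<in> cycle_edges C"
      using that unfolding cycle_edges_def by blast
    ultimately show False
      using no_removable_edge by blast
  qed
  have "visits_before E s t (C ! 0) (C ! n)"
  proof (rule visits_before_along_used_edges)
    show "uses_edge E s t (C ! i) (C ! Suc i)" if "i < n" for i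
    proof -
      have "Suc i mod length C = Suc i"
        using that n by simp
      then show ?thesis
        using used[of i] that n by simp
    qed
  qed (use n in simp)
  moreover have "visits_before E s t (C ! n) (C ! 0)"
    using used[of n] n by (simp add: uses_edge_imp_visits_before)
  ultimately show False
    by (rule visits_before_asym)
qed

end
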